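(* Let $Y=[0,1)$ with the topology whose open sets are exactly the sets $[0,\lambda)$ for $0\le\lambda\le1$, and let $L=\mathcal{O}(Y)$. Let $\mathfrak{I}=([0,1],\wedge,\vee,\neg,0,1)$ be regarded as a relational structure of type $(2,2,1,0,0)$. Then the type-2 fuzzy truth value algebra $\mathbb{M}$ is isomorphic to the convolution algebra $L^{\mathfrak{I}}$, and is isomorphic to the complex algebra $\hat{\mathfrak{I}}^+$ of the constant relational étalé $\hat{\mathfrak{I}}$ in the topos of étalé spaces over $Y$.
   Context: Let $\mathbb{I}=[0,1]$ with its usual order, $\wedge=\min$, $\vee=\max$, $\neg x=1-x$. The type-2 fuzzy truth value algebra is $\mathbb{M}=(\mathbb{I}^{\mathbb{I}},\sqcap,\sqcup,\neg,\underline{0},\underline{1})$ where, for $\alpha,\beta:\mathbb{I}\to\mathbb{I}$: $(\alpha\sqcap\beta)(x)=\bigvee\{\alpha(y)\wedge\beta(z)\mid y\wedge z=x\}$, $(\alpha\sqcup\beta)(x)=\bigvee\{\alpha(y)\wedge\beta(z)\mid y\vee z=x\}$, $(\neg\alpha)(x)=\bigvee\{\alpha(y)\mid \neg y=x\}$, $\underline{0}(x)=1$ if $x=0$ and $0$ otherwise, $\underline{1}(x)=1$ if $x=1$ and $0$ otherwise. As a relational structure, $\mathfrak{I}$ has ternary relations $\{(x,y,z)\mid x\wedge y=z\}$, $\{(x,y,z)\mid x\vee y=z\}$, binary relation $\{(x,y)\mid \neg x=y\}$, and unary relations $\{0\},\{1\}$. A relational structure $\mathfrak{X}=(X,(R_j)_J)$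 of type $\tau:J\to\mathbb{N}$, $j\mapsto n_j$, has $R_j\subseteq X^{n_j+1}$. For a complete lattice $L$, the convolution algebra $L^{\mathfrak{X}}$ has underlying set $L^X$ and operations $f_j(\alpha_1,\ldots,\alpha_{n_j})(x)=\bigvee\{\alpha_1(x_1)\wedge\cdots\wedge\alpha_{n_j}(x_{n_j})\mid (x_1,\ldots,x_{n_j},x)\in R_j\}$. An étalé space over $Y$ is a pair $(E,\pi)$ with $\pi:E\to Y$ a local homeomorphism; subobjects of $(E,\pi)$ correspond to open subsets of $E$. The constant étalé $\hat{X}$ is $X\times Y$ ($X$ discrete) with projection to $Y$; $\hat{X}^k$ is identified with $X^k\times Y$ and $\hat{R}=R\times Y$. The constant relational étalé is $\hat{\mathfrak{X}}=(\hat{X},(\hat{R}_j)_J)$, and its complex algebra $\hat{\mathfrak{X}}^+$ has underlying set the subobjects (open subsets) of $\hat{X}$ and operations given by étalé relational image: $(x,y)\in\hat{R}_j(A_1,\ldots,A_{n_j})$ iff there are $x_1,\ldots,x_{n_j}$ with $(x_1,\ldots,x_{n_j},x)\in R_j$ and $(x_i,y)\in A_i$ for all $i$. *)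

theory Defs
  imports "HOL-Analysis.Analysis"
begin

record 'a alg22100 =
  acar :: "'a set"
  ameet :: "'a \<Rightarrow> 'a \<Rightarrow> 'a"
  ajoin :: "'a \<Rightarrow> 'a \<Rightarrow> 'a"
  aneg :: "'a \<Rightarrow> 'a"
  azero :: "'a"
  aone :: "'a"

definition alg_iso :: "'a alg22100 \<Rightarrow> 'b alg22100 \<Rightarrow> ('a \<Rightarrow> 'b) \<Rightarrow> bool" where
  "alg_iso A B h \<longleftrightarrow>
     bij_betw h (acar A) (acar B) \<and>
     (\<forall>a\<in>acar A. \<forall>b\<in>acar A. h (ameet A a b) = ameet B (h a) (h b)) \<and>
     (\<forall>a\<in>acar A. \<forall>b\<in>acar A. h (ajoin A a b) = ajoin B (h a) (h b)) \<and>
     (\<forall>a\<in>acar A. h (aneg A a) = aneg B (h a)) \<and>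
     h (azero A) = azero B \<and> h (aone A) = aone B"

definition Iset :: "real set" where "Iset = {0..1}"

definition Rmeet :: "(real \<times> real \<times> real) set" where
  "Rmeet = {(x,y,z). x \<in> Iset \<and> y \<in> Iset \<and> z \<in> Iset \<and> min x y = z}"
definition Rjoin :: "(real \<times> real \<times> real) set" where
  "Rjoin = {(x,y,z). x \<in> Iset \<and> y \<in> Iset \<and> z \<in> Iset \<and> max x y = z}"
definition Rneg :: "(real \<times> real) set" where
  "Rneg = {(x,y). x \<in> Iset \<and> y \<in> Iset \<and> 1 - x = y}"
definition Rzero :: "real set" where "Rzero = {0}"
definition Rone :: "real set" where "Rone = {1}"

definition Malg :: "(real \<Rightarrow> real) alg22100" where
  "Malg = \<lparr> acar = Iset \<rightarrow>\<^sub>E Iset,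
     ameet = (\<lambda>\<alpha> \<beta>. restrict (\<lambda>x. Sup {min (\<alpha> y) (\<beta> z) | y z. y \<in> Iset \<and> z \<in> Iset \<and> min y z = x}) Iset),
     ajoin = (\<lambda>\<alpha> \<beta>. restrict (\<lambda>x. Sup {min (\<alpha> y) (\<beta> z) | y z. y \<in> Iset \<and> z \<in> Iset \<and> max y z = x}) Iset),
     aneg = (\<lambda>\<alpha>. restrict (\<lambda>x. Sup {\<alpha> y | y. y \<in> Iset \<and> 1 - y = x}) Iset),
     azero = restrict (\<lambda>x. if x = 0 then 1 else 0) Iset,
     aone = restrict (\<lambda>x. if x = 1 then 1 else 0) Iset \<rparr>"

definition Yset :: "real set" where "Yset = {0..<1}"

definition Ytop :: "real topology" where
  "Ytop = topology (\<lambda>U. \<exists>l. 0 \<le> l \<and> l \<le> 1 \<and> U = {0..<l})"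

definition Lset :: "real set set" where "Lset = {U. openin Ytop U}"

definition conv2 :: "(real \<times> real \<times> real) set \<Rightarrow> (real \<Rightarrow> real set) \<Rightarrow> (real \<Rightarrow> real set) \<Rightarrow> real \<Rightarrow> real set" where
  "conv2 R \<alpha> \<beta> = restrict (\<lambda>x. \<Union> {\<alpha> y \<inter> \<beta> z | y z. (y, z, x) \<in> R}) Iset"
definition conv1 :: "(real \<times> real) set \<Rightarrow> (real \<Rightarrow> real set) \<Rightarrow> real \<Rightarrow> real set" where
  "conv1 R \<alpha> = restrict (\<lambda>x. \<Union> {\<alpha> y | y. (y, x) \<in> R}) Iset"
definition conv0 :: "real set \<Rightarrow> real \<Rightarrow> real set" where
  "conv0 R = restrict (\<lambda>x. if x \<in> R then Yset else {}) Iset"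

definition LIalg :: "(real \<Rightarrow> real set) alg22100" where
  "LIalg = \<lparr> acar = Iset \<rightarrow>\<^sub>E Lset,
     ameet = conv2 Rmeet, ajoin = conv2 Rjoin, aneg = conv1 Rneg,
     azero = conv0 Rzero, aone = conv0 Rone \<rparr>"

text \<open>The constant etale is I x Y with I discrete; its subobjects are its open subsets.\<close>

definition Etop :: "(real \<times> real) topology" where
  "Etop = prod_topology (discrete_topology Iset) Ytop"

definition img2 :: "(real \<times> real \<times> real) set \<Rightarrow> (real \<times> real) set \<Rightarrow> (real \<times> real) set \<Rightarrow> (real \<times> real) set" where
  "img2 R A B = {(x, y). \<exists>x1 x2. (x1, x2, x) \<in> R \<and> (x1, y) \<in> A \<and> (x2, y) \<in> B}"
definition img1 :: "(real \<times> real) set \<Rightarrow> (real \<times> real) set \<Rightarrow> (real \<times> real) set" where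
  "img1 R A = {(x, y). \<exists>x1. (x1, x) \<in> R \<and> (x1, y) \<in> A}"
definition img0 :: "real set \<Rightarrow> (real \<times> real) set" where
  "img0 R = R \<times> Yset"

definition CAalg :: "(real \<times> real) set alg22100" where
  "CAalg = \<lparr> acar = {A. openin Etop A},
     ameet = img2 Rmeet, ajoin = img2 Rjoin, aneg = img1 Rneg,
     azero = img0 Rzero, aone = img0 Rone \<rparr>"

end

theory Submission
  imports Defs
begin

text \<open>The opens of \<open>Y\<close> are the segments \<open>[0, \<lambda>)\<close>, one for each \<open>\<lambda> \<in> [0, 1]\<close>, and
  \<open>\<lambda> \<mapsto> [0, \<lambda>)\<close> turns suprema into unions and minima into intersections. Applied pointwise,
  it carries the suprema of \<open>min (\<alpha> y) (\<beta> z)\<close> defining the operations of \<open>\<M>\<close> to the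
  unions of \<open>\<alpha> y \<inter> \<beta> z\<close> defining the convolution algebra \<open>L\<^sup>\<I>\<close>. Since \<open>[0, 1]\<close> is
  discrete, an open subset of the constant etale \<open>[0, 1] \<times> Y\<close> is the disjoint union of
  its slices, i.e. a \<open>[0, 1]\<close>-indexed family of opens of \<open>Y\<close>; under this correspondence the
  etale relational images are exactly the convolution operations.\<close>

lemma UN_atLeastLessThan_eq_Sup:
  fixes S :: "'a::conditionally_complete_linorder set"
  assumes "S \<noteq> {}" "bdd_above S"
  shows "(\<Union>s\<in>S. {a..<s}) = {a..<Sup S}"
  using assms by (auto simp: less_cSup_iff[OF assms] intro: less_le_trans[OF _ cSup_upper])

lemma bij_betw_PiE_compose:
  assumes "bij_betw g B C"
  shows "bij_betw (\<lambda>f. \<lambda>x\<in>A. g (f x)) (A \<rightarrow>\<^sub>E B) (A \<rightarrow>\<^sub>E C)"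
proof (rule bij_betwI[where g = "\<lambda>f. \<lambda>x\<in>A. inv_into B g (f x)"])
  have g: "g \<in> B \<rightarrow> C" and g': "inv_into B g \<in> C \<rightarrow> B"
    using assms by (auto simp: bij_betw_def inv_into_into)
  show "(\<lambda>f. \<lambda>x\<in>A. g (f x)) \<in> (A \<rightarrow>\<^sub>E B) \<rightarrow> (A \<rightarrow>\<^sub>E C)"
    using g by auto
  show "(\<lambda>f. \<lambda>x\<in>A. inv_into B g (f x)) \<in> (A \<rightarrow>\<^sub>E C) \<rightarrow> (A \<rightarrow>\<^sub>E B)"
    using g' by auto
  show "(\<lambda>x\<in>A. inv_into B g ((\<lambda>x\<in>A. g (f x)) x)) = f" if "f \<in> A \<rightarrow>\<^sub>E B" for f
    using that assms by (intro ext) (auto simp: bij_betw_inv_into_left PiE_iff extensional_def)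
  show "(\<lambda>x\<in>A. g ((\<lambda>x\<in>A. inv_into B g (f x)) x)) = f" if "f \<in> A \<rightarrow>\<^sub>E C" for f
    using that assms by (intro ext) (auto simp: bij_betw_inv_into_right PiE_iff extensional_def)
qed

lemma alg_iso_comp:
  assumes "alg_iso A B h" "alg_iso B C g"
  shows "alg_iso A C (g \<circ> h)"
proof -
  have "h a \<in> acar B" if "a \<in> acar A" for a
    using assms(1) that unfolding alg_iso_def by (meson bij_betw_apply)
  then show ?thesis
    using assms unfolding alg_iso_def by (auto intro: bij_betw_trans)
qed

lemma openin_prod_discrete_topology_iff:
  "openin (prod_topology (discrete_topology I) X) A \<longleftrightarrow>
    (\<exists>U \<in> I \<rightarrow>\<^sub>E {V. openin X V}. A = Sigma I U)"
proof
  assume A: "openin (prod_topology (discrete_topology I) X) A"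
  have "openin X {x. (i, x) \<in> A}" for i
  proof (subst openin_subopen, intro ballI)
    fix x assume "x \<in> {x. (i, x) \<in> A}"
    then have "(i, x) \<in> A"
      by simp
    then obtain V W where "openin (discrete_topology I) V" "openin X W" "i \<in> V" "x \<in> W" "V \<times> W \<subseteq> A"
      using A openin_prod_topology_alt by metis
    then show "\<exists>T. openin X T \<and> x \<in> T \<and> T \<subseteq> {x. (i, x) \<in> A}"
      by blast
  qed
  then have "(\<lambda>i\<in>I. {x. (i, x) \<in> A}) \<in> I \<rightarrow>\<^sub>E {V. openin X V}"
    by simp
  moreover have "A = Sigma I (\<lambda>i\<in>I. {x. (i, x) \<in> A})"
    using openin_subset[OF A] by auto
  ultimately show "\<exists>U \<in> I \<rightarrow>\<^sub>E {V. openin X V}. A = Sigma I U"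
    by blast
next
  assume "\<exists>U \<in> I \<rightarrow>\<^sub>E {V. openin X V}. A = Sigma I U"
  then obtain U where U: "U \<in> I \<rightarrow>\<^sub>E {V. openin X V}" and A: "A = Sigma I U" by blast
  show "openin (prod_topology (discrete_topology I) X) A"
    unfolding openin_prod_topology_alt
  proof (intro allI impI)
    fix i x assume "(i, x) \<in> A"
    then show "\<exists>V W. openin (discrete_topology I) V \<and> openin X W \<and> i \<in> V \<and> x \<in> W \<and> V \<times> W \<subseteq> A"
      using U A by (intro exI[of _ "{i}"] exI[of _ "U i"]) auto
  qed
qed

lemma inj_on_Sigma_PiE: "inj_on (Sigma I) (I \<rightarrow>\<^sub>E B)"
proof (rule inj_onI)
  fix U V assume U: "U \<in> I \<rightarrow>\<^sub>E B" and V: "V \<in> I \<rightarrow>\<^sub>E B" and eq: "Sigma I U = Sigma I V"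
  show "U = V"
  proof (rule PiE_ext[OF U V])
    fix i assume "i \<in> I"
    then show "U i = V i"
      using eq by blast
  qed
qed

lemma bij_betw_Sigma_opens:
  "bij_betw (Sigma I) (I \<rightarrow>\<^sub>E {V. openin X V}) {A. openin (prod_topology (discrete_topology I) X) A}"
proof (rule bij_betw_imageI[OF inj_on_Sigma_PiE])
  show "Sigma I ` (I \<rightarrow>\<^sub>E {V. openin X V}) = {A. openin (prod_topology (discrete_topology I) X) A}"
    unfolding openin_prod_discrete_topology_iff by blast
qed

lemma istopology_initial_segments:
  "istopology (\<lambda>U. \<exists>l. 0 \<le> l \<and> l \<le> 1 \<and> U = {0..<l::real})"
  unfolding istopology_def
proof (intro conjI allI impI)
  fix S T :: "real set"
  assume "\<exists>l. 0 \<le> l \<and> l \<le> 1 \<and> S = {0..<l}" "\<exists>l. 0 \<le> l \<and> l \<le> 1 \<and> T = {0..<l}"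
  then obtain a b where "0 \<le> a" "a \<le> 1" "S = {0..<a}" "0 \<le> b" "b \<le> 1" "T = {0..<b}"
    by blast
  then show "\<exists>l. 0 \<le> l \<and> l \<le> 1 \<and> S \<inter> T = {0..<l}"
    by (intro exI[of _ "min a b"]) auto
next
  fix K :: "real set set"
  assume segments: "\<forall>U\<in>K. \<exists>l. 0 \<le> l \<and> l \<le> 1 \<and> U = {0..<l}"
  define ls where "ls = {l. 0 \<le> l \<and> l \<le> 1 \<and> {0..<l} \<in> K}"
  have K: "K = (\<lambda>l. {0..<l}) ` ls"
    using segments unfolding ls_def by auto
  show "\<exists>l. 0 \<le> l \<and> l \<le> 1 \<and> \<Union>K = {0..<l}"
  proof (cases "ls = {}")
    case True
    then show ?thesis using K by auto
  next
    case False
    then obtain l where "l \<in> ls" by blast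
    have bdd: "bdd_above ls" unfolding ls_def by (auto intro: bdd_aboveI[of _ 1])
    have "\<Union>K = {0..<Sup ls}"
      using K UN_atLeastLessThan_eq_Sup[OF False bdd] by simp
    moreover have "0 \<le> Sup ls"
      using cSup_upper[OF \<open>l \<in> ls\<close> bdd] \<open>l \<in> ls\<close> by (simp add: ls_def)
    moreover have "Sup ls \<le> 1"
      using False by (intro cSup_least) (auto simp: ls_def)
    ultimately show ?thesis by blast
  qed
qed

lemma openin_Ytop: "openin Ytop U \<longleftrightarrow> (\<exists>l. 0 \<le> l \<and> l \<le> 1 \<and> U = {0..<l})"
  unfolding Ytop_def using istopology_initial_segments by simp

lemma bij_betw_Iset_Lset: "bij_betw (\<lambda>l. {0..<l}) Iset Lset"
proof (rule bij_betw_imageI)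
  show "inj_on (\<lambda>l. {0..<l}) Iset"
    by (auto intro!: inj_onI simp: Iset_def Ico_eq_Ico)
  show "(\<lambda>l. {0..<l}) ` Iset = Lset"
    by (auto simp: Lset_def openin_Ytop Iset_def)
qed

definition opens_of :: "(real \<Rightarrow> real) \<Rightarrow> real \<Rightarrow> real set" where
  "opens_of \<alpha> = (\<lambda>x\<in>Iset. {0..<\<alpha> x})"

lemma bij_betw_opens_of: "bij_betw opens_of (Iset \<rightarrow>\<^sub>E Iset) (Iset \<rightarrow>\<^sub>E Lset)"
  unfolding opens_of_def by (rule bij_betw_PiE_compose[OF bij_betw_Iset_Lset])

text \<open>Idempotence of \<open>op\<close> makes the index set of the supremum nonempty (it contains \<open>(x, x)\<close>),
  so the real \<open>Sup\<close> is not applied to \<open>{}\<close>, where it has a junk value.\<close>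

lemma opens_of_convolution:
  fixes op :: "real \<Rightarrow> real \<Rightarrow> real"
  assumes \<alpha>: "\<alpha> \<in> Iset \<rightarrow>\<^sub>E Iset" and \<beta>: "\<beta> \<in> Iset \<rightarrow>\<^sub>E Iset" and idem: "\<And>x. op x x = x"
  shows "opens_of (\<lambda>x\<in>Iset. Sup {min (\<alpha> y) (\<beta> z) | y z. y \<in> Iset \<and> z \<in> Iset \<and> op y z = x})
    = conv2 {(y, z, x). y \<in> Iset \<and> z \<in> Iset \<and> x \<in> Iset \<and> op y z = x} (opens_of \<alpha>) (opens_of \<beta>)"
    (is "opens_of ?\<gamma> = conv2 ?R _ _")
proof (rule ext)
  fix x
  show "opens_of ?\<gamma> x = conv2 ?R (opens_of \<alpha>) (opens_of \<beta>) x"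
  proof (cases "x \<in> Iset")
    case x: True
    define S where "S = {min (\<alpha> y) (\<beta> z) | y z. y \<in> Iset \<and> z \<in> Iset \<and> op y z = x}"
    have "\<alpha> y \<le> 1" if "y \<in> Iset" for y
      using PiE_mem[OF \<alpha> that] by (simp add: Iset_def)
    then have bdd: "bdd_above S"
      unfolding S_def by (auto intro!: bdd_aboveI[of _ 1] min.coboundedI1)
    have "S \<noteq> {}"
      using x idem unfolding S_def by blast
    have "conv2 ?R (opens_of \<alpha>) (opens_of \<beta>) x
        = \<Union> {opens_of \<alpha> y \<inter> opens_of \<beta> z | y z. y \<in> Iset \<and> z \<in> Iset \<and> op y z = x}"
      using x by (simp add: conv2_def)
    also have "{opens_of \<alpha> y \<inter> opens_of \<beta> z | y z. y \<in> Iset \<and> z \<in> Iset \<and> op y z = x}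
        = (\<lambda>s. {0..<s}) ` S"
      unfolding S_def opens_of_def by auto
    also have "\<Union> ((\<lambda>s. {0..<s}) ` S) = {0..<Sup S}"
      by (rule UN_atLeastLessThan_eq_Sup[OF \<open>S \<noteq> {}\<close> bdd])
    also have "\<dots> = opens_of ?\<gamma> x"
      using x by (simp add: opens_of_def S_def)
    finally show ?thesis ..
  qed (simp add: conv2_def opens_of_def)
qed

lemma opens_of_negation:
  assumes "\<alpha> \<in> Iset \<rightarrow>\<^sub>E Iset"
  shows "opens_of (aneg Malg \<alpha>) = conv1 Rneg (opens_of \<alpha>)"
proof (rule ext)
  fix x
  show "opens_of (aneg Malg \<alpha>) x = conv1 Rneg (opens_of \<alpha>) x"
  proof (cases "x \<in> Iset")
    case x: True
    then have "1 - x \<in> Iset" by (simp add: Iset_def)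
    then have "{\<alpha> y | y. y \<in> Iset \<and> 1 - y = x} = {\<alpha> (1 - x)}"
      and "{opens_of \<alpha> y | y. (y, x) \<in> Rneg} = {opens_of \<alpha> (1 - x)}"
      using x by (auto simp: Rneg_def)
    then show ?thesis
      using x \<open>1 - x \<in> Iset\<close> by (simp add: Malg_def conv1_def opens_of_def)
  qed (simp add: Malg_def conv1_def opens_of_def)
qed

lemma alg_iso_Malg_LIalg: "alg_iso Malg LIalg opens_of"
  unfolding alg_iso_def
proof (intro conjI ballI)
  show "bij_betw opens_of (acar Malg) (acar LIalg)"
    using bij_betw_opens_of by (simp add: Malg_def LIalg_def)
  fix \<alpha> \<beta> assume "\<alpha> \<in> acar Malg" "\<beta> \<in> acar Malg"
  then have \<alpha>: "\<alpha> \<in> Iset \<rightarrow>\<^sub>E Iset" and \<beta>: "\<beta> \<in> Iset \<rightarrow>\<^sub>E Iset"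
    by (auto simp: Malg_def)
  show "opens_of (ameet Malg \<alpha> \<beta>) = ameet LIalg (opens_of \<alpha>) (opens_of \<beta>)"
    using opens_of_convolution[OF \<alpha> \<beta>, of min] by (simp add: Malg_def LIalg_def Rmeet_def)
  show "opens_of (ajoin Malg \<alpha> \<beta>) = ajoin LIalg (opens_of \<alpha>) (opens_of \<beta>)"
    using opens_of_convolution[OF \<alpha> \<beta>, of max] by (simp add: Malg_def LIalg_def Rjoin_def)
next
  fix \<alpha> assume "\<alpha> \<in> acar Malg"
  then show "opens_of (aneg Malg \<alpha>) = aneg LIalg (opens_of \<alpha>)"
    using opens_of_negation by (simp add: Malg_def LIalg_def)
next
  show "opens_of (azero Malg) = azero LIalg" "opens_of (aone Malg) = aone LIalg"
    by (auto intro!: ext simp: Malg_def LIalg_def conv0_def opens_of_def Rzero_def Rone_def Yset_def)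
qed

lemma alg_iso_LIalg_CAalg: "alg_iso LIalg CAalg (Sigma Iset)"
  unfolding alg_iso_def
proof (intro conjI ballI)
  show "bij_betw (Sigma Iset) (acar LIalg) (acar CAalg)"
    using bij_betw_Sigma_opens by (simp add: LIalg_def CAalg_def Lset_def Etop_def)
  fix U V
  show "Sigma Iset (ameet LIalg U V) = ameet CAalg (Sigma Iset U) (Sigma Iset V)"
    by (auto simp: LIalg_def CAalg_def conv2_def img2_def Rmeet_def; blast)
  show "Sigma Iset (ajoin LIalg U V) = ajoin CAalg (Sigma Iset U) (Sigma Iset V)"
    by (auto simp: LIalg_def CAalg_def conv2_def img2_def Rjoin_def; blast)
  show "Sigma Iset (aneg LIalg U) = aneg CAalg (Sigma Iset U)"
    by (auto simp: LIalg_def CAalg_def conv1_def img1_def Rneg_def)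
next
  show "Sigma Iset (azero LIalg) = azero CAalg" "Sigma Iset (aone LIalg) = aone CAalg"
    by (auto simp: LIalg_def CAalg_def conv0_def img0_def Rzero_def Rone_def Iset_def
        split: if_splits)
qed

theorem corollary2:
  shows "(\<exists>h. alg_iso Malg LIalg h) \<and> (\<exists>g. alg_iso Malg CAalg g)"
  using alg_iso_Malg_LIalg alg_iso_comp[OF alg_iso_Malg_LIalg alg_iso_LIalg_CAalg] by blast

end
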